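(* Let the Markov jump process on the finite set $K$ with rates $W$ be irreducible with stationary distribution $\rho$, let $V:K\to\mathbb{R}$ and $b\in\mathbb{R}$. For small $h\in\mathbb{R}$ let $\mu=\mu_h$ be the stationary distribution of the perturbed dynamics with rates $W(x,y)e^{\frac{bh}{2}[V(y)-V(x)]}$. Then the dynamical fluctuation functional satisfies, as $h\to0$, \[ I(\mu)=-\frac{bh}{4}\sum_x\mu(x)\,LV(x)+o(h^2). \]
   Context: $W(x,y)\ge0$ are transition rates with backward generator $Lf(x)=\sum_yW(x,y)[f(y)-f(x)]$. For a probability distribution $\mu$ on $K$, the (Donsker–Varadhan) dynamical fluctuation functional of the occupation-time empirical distribution is $I(\mu)=-\inf_{g>0}\sum_x\mu(x)\frac{Lg(x)}{g(x)}$, the infimum over strictly positive functions $g:K\to\mathbb{R}$. *)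

theory Defs
  imports Complex_Main "HOL-Library.Landau_Symbols"
begin

definition gen :: "('a::finite \<Rightarrow> 'a \<Rightarrow> real) \<Rightarrow> ('a \<Rightarrow> real) \<Rightarrow> 'a \<Rightarrow> real" where
  "gen W f x = (\<Sum>y\<in>UNIV. W x y * (f y - f x))"

definition rates :: "('a::finite \<Rightarrow> 'a \<Rightarrow> real) \<Rightarrow> bool" where
  "rates W \<longleftrightarrow> (\<forall>x y. W x y \<ge> 0)"

definition irreducible_rates :: "('a::finite \<Rightarrow> 'a \<Rightarrow> real) \<Rightarrow> bool" where
  "irreducible_rates W \<longleftrightarrow> (\<forall>x y. (x, y) \<in> {(a, c). W a c > 0}\<^sup>*)"

definition prob_dist :: "('a::finite \<Rightarrow> real) \<Rightarrow> bool" where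
  "prob_dist \<mu> \<longleftrightarrow> (\<forall>x. \<mu> x \<ge> 0) \<and> (\<Sum>x\<in>UNIV. \<mu> x) = 1"

definition stationary :: "('a::finite \<Rightarrow> 'a \<Rightarrow> real) \<Rightarrow> ('a \<Rightarrow> real) \<Rightarrow> bool" where
  "stationary W \<mu> \<longleftrightarrow> prob_dist \<mu> \<and>
     (\<forall>y. (\<Sum>x\<in>UNIV. \<mu> x * W x y) - \<mu> y * (\<Sum>z\<in>UNIV. W y z) = 0)"

definition DV_I :: "('a::finite \<Rightarrow> 'a \<Rightarrow> real) \<Rightarrow> ('a \<Rightarrow> real) \<Rightarrow> real" where
  "DV_I W \<mu> = - (INF g \<in> {g :: 'a \<Rightarrow> real. \<forall>x. g x > 0}. \<Sum>x\<in>UNIV. \<mu> x * gen W g x / g x)"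

end

theory Submission
  imports Defs "HOL-Real_Asymp.Real_Asymp"
begin

(*
  The perturbed rates W(x,y) e^{a[V(y)-V(x)]} with a = bh/2 are an
  exponential tilting of W, and for the stationary law m of a tilted dynamics the
  Donsker-Varadhan infimum is attained at g = e^{aV}.  Indeed, writing an arbitrary positive
  g as e^{aV + f}, the inequality ln r <= r - 1 bounds the objective from below by its value
  at e^{aV} plus the stationary flux  sum m(x) Q(x,y) [f(y) - f(x)],  which vanishes.
  Hence I(m) = - sum m(x) W(x,y) (e^{a[V(y)-V(x)]} - 1) exactly, for every a.
  Subtracting -(a/2) sum m LV and using once more that the tilted flux of V vanishes, the
  error is  sum m(x) W(x,y) phi(a[V(y)-V(x)])  with  phi(t) = 1 - e^t + t(1 + e^t)/2 = O(t^3).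
  Since m is a probability distribution, every summand is o(h^2) as h -> 0.  The identities
  are exact for each h.
*)

text \<open>For a stationary distribution, the expected increment of any observable along a jump
  vanishes: this is the master equation tested against f.\<close>
lemma stationary_flux_zero:
  fixes Q :: "'a::finite \<Rightarrow> 'a \<Rightarrow> real"
  assumes "stationary Q m"
  shows "(\<Sum>x\<in>UNIV. \<Sum>y\<in>UNIV. m x * Q x y * (f y - f x)) = 0"
proof -
  from assms have balance: "\<And>y. (\<Sum>x\<in>UNIV. m x * Q x y) - m y * (\<Sum>z\<in>UNIV. Q y z) = 0"
    unfolding stationary_def by blast
  have "0 = (\<Sum>y\<in>UNIV. f y * ((\<Sum>x\<in>UNIV. m x * Q x y) - m y * (\<Sum>z\<in>UNIV. Q y z)))"
    using balance by simp
  also have "\<dots> = (\<Sum>y\<in>UNIV. \<Sum>x\<in>UNIV. m x * Q x y * f y)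
                  - (\<Sum>y\<in>UNIV. \<Sum>z\<in>UNIV. m y * Q y z * f y)"
    by (simp add: right_diff_distrib sum_subtractf sum_distrib_left sum_distrib_right mult_ac)
  also have "\<dots> = (\<Sum>x\<in>UNIV. \<Sum>y\<in>UNIV. m x * Q x y * f y)
                  - (\<Sum>x\<in>UNIV. \<Sum>y\<in>UNIV. m x * Q x y * f x)"
    by (subst sum.swap) simp
  also have "\<dots> = (\<Sum>x\<in>UNIV. \<Sum>y\<in>UNIV. m x * Q x y * (f y - f x))"
    by (simp add: right_diff_distrib sum_subtractf)
  finally show ?thesis by simp
qed

lemma DV_objective_sum:
  fixes W :: "'a::finite \<Rightarrow> 'a \<Rightarrow> real"
  assumes "\<And>x. g x > 0"
  shows "(\<Sum>x\<in>UNIV. m x * gen W g x / g x) = (\<Sum>x\<in>UNIV. \<Sum>y\<in>UNIV. m x * W x y * (g y / g x - 1))"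
proof -
  have "gen W g x / g x = (\<Sum>y\<in>UNIV. W x y * (g y / g x - 1))" for x
    using assms[of x] unfolding gen_def sum_divide_distrib
    by (intro sum.cong refl) (simp add: field_simps)
  then have "(\<Sum>x\<in>UNIV. m x * (gen W g x / g x))
      = (\<Sum>x\<in>UNIV. \<Sum>y\<in>UNIV. m x * W x y * (g y / g x - 1))"
    by (simp add: sum_distrib_left mult_ac)
  then show ?thesis by simp
qed

text \<open>Pointwise convexity bound: writing g = e^{aV + f}, the jump ratio g(y)/g(x) dominates
  its linearization around the tilt e^{a[V(y)-V(x)]}; this is ln r \<le> r - 1.\<close>
lemma tilted_ratio_bound:
  fixes g V :: "'a \<Rightarrow> real" and a :: real
  assumes "g x > 0" "g y > 0"
  defines "f \<equiv> \<lambda>z. ln (g z) - a * V z"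
  shows "exp (a * (V y - V x)) - 1 + exp (a * (V y - V x)) * (f y - f x) \<le> g y / g x - 1"
proof -
  define E where "E = exp (a * (V y - V x))"
  define r where "r = g y / (g x * E)"
  have E_pos: "E > 0" unfolding E_def by simp
  have "r > 0" unfolding r_def using assms E_pos by simp
  then have "ln r \<le> r - 1" by (rule ln_le_minus_one)
  moreover have "ln r = f y - f x"
    unfolding r_def f_def E_def using assms by (simp add: ln_div ln_mult algebra_simps)
  ultimately have "E * (f y - f x) \<le> E * (r - 1)"
    using E_pos by (simp add: mult_left_mono)
  moreover have "g y / g x - 1 = E - 1 + E * (r - 1)"
    unfolding r_def using E_pos assms by (simp add: field_simps)
  ultimately show ?thesis unfolding E_def by linarith
qed

text \<open>For the stationary law m of the tilted rates, every positive g gives an objective value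
  at least that of g = e^{aV}; the correction term is a stationary flux and vanishes.\<close>
lemma DV_objective_lower_bound:
  fixes W :: "'a::finite \<Rightarrow> 'a \<Rightarrow> real"
  assumes W: "rates W" and st: "stationary (\<lambda>x y. W x y * exp (a * (V y - V x))) m"
    and g_pos: "\<And>x. g x > 0"
  shows "(\<Sum>x\<in>UNIV. \<Sum>y\<in>UNIV. m x * W x y * (exp (a * (V y - V x)) - 1))
           \<le> (\<Sum>x\<in>UNIV. m x * gen W g x / g x)"
proof -
  let ?E = "\<lambda>x y. exp (a * (V y - V x))"
  define f where "f z = ln (g z) - a * V z" for z
  have m_nonneg: "\<And>x. m x \<ge> 0" using st unfolding stationary_def prob_dist_def by blast
  have W_nonneg: "\<And>x y. W x y \<ge> 0" using W unfolding rates_def by blast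
  have flux: "(\<Sum>x\<in>UNIV. \<Sum>y\<in>UNIV. m x * (W x y * ?E x y) * (f y - f x)) = 0"
    by (rule stationary_flux_zero[OF st])
  have "(\<Sum>x\<in>UNIV. \<Sum>y\<in>UNIV. m x * W x y * (?E x y - 1))
      = (\<Sum>x\<in>UNIV. \<Sum>y\<in>UNIV. m x * W x y * (?E x y - 1))
        + (\<Sum>x\<in>UNIV. \<Sum>y\<in>UNIV. m x * (W x y * ?E x y) * (f y - f x))"
    using flux by simp
  also have "\<dots> = (\<Sum>x\<in>UNIV. \<Sum>y\<in>UNIV. m x * W x y * (?E x y - 1)
                                      + m x * (W x y * ?E x y) * (f y - f x))"
    by (simp add: sum.distrib)
  also have "\<dots> = (\<Sum>x\<in>UNIV. \<Sum>y\<in>UNIV. m x * W x y * (?E x y - 1 + ?E x y * (f y - f x)))"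
    by (intro sum.cong refl) (simp add: algebra_simps)
  also have "\<dots> \<le> (\<Sum>x\<in>UNIV. \<Sum>y\<in>UNIV. m x * W x y * (g y / g x - 1))"
    unfolding f_def
    by (intro sum_mono mult_left_mono tilted_ratio_bound mult_nonneg_nonneg m_nonneg W_nonneg g_pos)
  also have "\<dots> = (\<Sum>x\<in>UNIV. m x * gen W g x / g x)"
    using g_pos by (rule DV_objective_sum[symmetric])
  finally show ?thesis .
qed

text \<open>Closed form of the Donsker-Varadhan functional at the stationary law of a tilted
  dynamics: the infimum is attained at g = e^{aV}.\<close>
lemma DV_I_tilted_stationary:
  fixes W :: "'a::finite \<Rightarrow> 'a \<Rightarrow> real"
  assumes W: "rates W" and st: "stationary (\<lambda>x y. W x y * exp (a * (V y - V x))) m"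
  shows "DV_I W m = - (\<Sum>x\<in>UNIV. \<Sum>y\<in>UNIV. m x * W x y * (exp (a * (V y - V x)) - 1))"
proof -
  define F where "F g = (\<Sum>x\<in>UNIV. m x * gen W g x / g x)" for g :: "'a \<Rightarrow> real"
  define S where "S = {g :: 'a \<Rightarrow> real. \<forall>x. g x > 0}"
  define g0 where "g0 = (\<lambda>x. exp (a * V x))"
  have g0_in: "g0 \<in> S" unfolding S_def g0_def by simp
  have F_g0: "F g0 = (\<Sum>x\<in>UNIV. \<Sum>y\<in>UNIV. m x * W x y * (exp (a * (V y - V x)) - 1))"
    unfolding F_def g0_def
    by (subst DV_objective_sum) (simp_all add: exp_diff[symmetric] right_diff_distrib)
  have lower: "F g0 \<le> F g" if "g \<in> S" for g
    unfolding F_g0 unfolding F_def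
    by (rule DV_objective_lower_bound[OF W st]) (use that in \<open>simp add: S_def\<close>)
  have "(INF g \<in> S. F g) = F g0"
  proof (rule antisym)
    show "(INF g \<in> S. F g) \<le> F g0"
      by (rule cINF_lower[OF _ g0_in]) (auto intro: bdd_belowI2 lower)
    show "F g0 \<le> (INF g \<in> S. F g)"
      using g0_in by (intro cINF_greatest lower) auto
  qed
  then show ?thesis unfolding DV_I_def using F_g0 by (simp add: F_def S_def)
qed

definition phi :: "real \<Rightarrow> real" where
  "phi t = 1 - exp t + t * (1 + exp t) / 2"

lemma DV_I_tilted_remainder:
  fixes W :: "'a::finite \<Rightarrow> 'a \<Rightarrow> real"
  assumes W: "rates W" and st: "stationary (\<lambda>x y. W x y * exp (a * (V y - V x))) m"
  shows "DV_I W m + a / 2 * (\<Sum>x\<in>UNIV. m x * gen W V x)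
           = (\<Sum>x\<in>UNIV. \<Sum>y\<in>UNIV. m x * W x y * phi (a * (V y - V x)))"
proof -
  let ?E = "\<lambda>x y. exp (a * (V y - V x))"
  have flux: "(\<Sum>x\<in>UNIV. \<Sum>y\<in>UNIV. m x * (W x y * ?E x y) * (V y - V x)) = 0"
    by (rule stationary_flux_zero[OF st])
  have gen_sum: "(\<Sum>x\<in>UNIV. m x * gen W V x) = (\<Sum>x\<in>UNIV. \<Sum>y\<in>UNIV. m x * W x y * (V y - V x))"
    unfolding gen_def by (simp add: sum_distrib_left mult_ac)
  have "(\<Sum>x\<in>UNIV. \<Sum>y\<in>UNIV. m x * W x y * phi (a * (V y - V x)))
      = (\<Sum>x\<in>UNIV. \<Sum>y\<in>UNIV. m x * W x y * (1 - ?E x y)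
          + a / 2 * (m x * W x y * (V y - V x))
          + a / 2 * (m x * (W x y * ?E x y) * (V y - V x)))"
    by (intro sum.cong refl) (simp add: phi_def field_simps)
  also have "\<dots> = DV_I W m + a / 2 * (\<Sum>x\<in>UNIV. m x * gen W V x)
      + a / 2 * (\<Sum>x\<in>UNIV. \<Sum>y\<in>UNIV. m x * (W x y * ?E x y) * (V y - V x))"
    unfolding DV_I_tilted_stationary[OF W st] gen_sum
    by (simp add: sum.distrib sum_distrib_left algebra_simps sum_subtractf sum_negf)
  finally show ?thesis using flux by simp
qed

text \<open>phi vanishes to third order at 0, so phi(ch) = o(h^2) for every constant c.\<close>
lemma phi_scaled_small: "(\<lambda>h. phi (c * h)) \<in> o[at (0::real)](\<lambda>h. h ^ 2)"
proof (cases "c = 0")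
  case True
  then show ?thesis by (simp add: phi_def)
next
  case False
  have "phi \<in> o[at 0](\<lambda>t. t ^ 2)"
    unfolding phi_def by real_asymp
  moreover have "filterlim (\<lambda>h. c * h) (at 0) (at (0::real))"
    using False by real_asymp
  ultimately have "(\<lambda>h. phi (c * h)) \<in> o[at 0](\<lambda>h. (c * h) ^ 2)"
    by (rule landau_o.small.compose)
  then show ?thesis using False by (simp add: power_mult_distrib)
qed

lemma prob_dist_le_one:
  assumes "prob_dist m"
  shows "\<bar>m x\<bar> \<le> 1"
proof -
  have nonneg: "\<And>z. m z \<ge> 0" using assms unfolding prob_dist_def by blast
  have "m x \<le> (\<Sum>z\<in>UNIV. m z)" by (rule member_le_sum) (auto simp: nonneg)
  then show ?thesis using assms nonneg unfolding prob_dist_def by simp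
qed

lemma bounded_times_phi_small:
  fixes w :: "real \<Rightarrow> real"
  assumes "\<And>h. \<bar>w h\<bar> \<le> B"
  shows "(\<lambda>h. w h * phi (c * h)) \<in> o[at 0](\<lambda>h. h ^ 2)"
proof -
  have "(\<lambda>h. w h * phi (c * h)) \<in> O[at 0](\<lambda>h. phi (c * h))"
  proof (rule bigoI[where c = B], intro always_eventually allI)
    fix h
    have "\<bar>w h\<bar> * \<bar>phi (c * h)\<bar> \<le> B * \<bar>phi (c * h)\<bar>"
      by (intro mult_right_mono assms) simp
    then show "norm (w h * phi (c * h)) \<le> B * norm (phi (c * h))"
      by (simp add: abs_mult)
  qed
  then show ?thesis using phi_scaled_small by (rule landau_o.big_small_trans)
qed

theorem proposition3:
  fixes W :: "'a::finite \<Rightarrow> 'a \<Rightarrow> real" and \<rho> :: "'a \<Rightarrow> real"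
    and V :: "'a \<Rightarrow> real" and b :: real and \<mu> :: "real \<Rightarrow> 'a \<Rightarrow> real"
  assumes "rates W" and "irreducible_rates W" and "stationary W \<rho>"
    and "\<And>h. stationary (\<lambda>x y. W x y * exp (b * h / 2 * (V y - V x))) (\<mu> h)"
  shows "(\<lambda>h. DV_I W (\<mu> h) - (- (b * h / 4) * (\<Sum>x\<in>UNIV. \<mu> h x * gen W V x)))
           \<in> o[at 0](\<lambda>h. h ^ 2)"
proof -
  have remainder: "DV_I W (\<mu> h) - (- (b * h / 4) * (\<Sum>x\<in>UNIV. \<mu> h x * gen W V x))
      = (\<Sum>x\<in>UNIV. \<Sum>y\<in>UNIV. \<mu> h x * W x y * phi (b / 2 * (V y - V x) * h))" for h
    using DV_I_tilted_remainder[OF assms(1) assms(4)[of h]] by (simp add: mult_ac)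
  have "(\<lambda>h. \<mu> h x * W x y * phi (b / 2 * (V y - V x) * h)) \<in> o[at 0](\<lambda>h. h ^ 2)" for x y
  proof (rule bounded_times_phi_small)
    fix h
    have "\<bar>\<mu> h x\<bar> \<le> 1"
      using assms(4)[of h] unfolding stationary_def by (blast intro: prob_dist_le_one)
    then show "\<bar>\<mu> h x * W x y\<bar> \<le> \<bar>W x y\<bar>"
      by (simp add: abs_mult mult_left_le_one_le)
  qed
  then have "(\<lambda>h. \<Sum>x\<in>UNIV. \<Sum>y\<in>UNIV. \<mu> h x * W x y * phi (b / 2 * (V y - V x) * h))
               \<in> o[at 0](\<lambda>h. h ^ 2)"
    by (intro big_sum_in_smallo)
  then show ?thesis by (simp only: remainder)
qed

end
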